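(* Let $C_0[-1,1]$ be the Banach space (sup norm) of continuous complex functions on $[-1,1]$ vanishing at $\pm1$. Let $\theta_1\colon[0,1]\to[-1,0]$ be a decreasing bijection and $\theta_2\colon[0,1]\to[0,1]$ an increasing bijection. For $t\in[0,1]$ let $\mathscr{N}_t=\{f\in C_0[-1,1]:\mathrm{supp}(f)\subseteq[\theta_1(t),\theta_2(t)]\}$ and $\mathfrak{N}=\{\mathscr{N}_t:t\in[0,1]\}$ (a maximal nest). Let $\varGamma([-1,1])$ be the group (under composition) of increasing bijections of $[-1,1]$, and for $\varphi\in\varGamma([-1,1])$ let $V_\varphi f=f\circ\varphi$ ($f\in C_0[-1,1]$). Then: (i) $\varGamma_{\theta_1,\theta_2}([-1,1]):=\{\varphi\in\varGamma([-1,1]):\theta_1^{-1}\circ\varphi\circ\theta_1=\theta_2^{-1}\circ\varphi\circ\theta_2\}$ is a subgroup of $\varGamma([-1,1])$; (ii) for $\varphi\in\varGamma([-1,1])$, $V_\varphi$ is a collineation of $\mathfrak{N}$ if and only if $\varphi\in\varGamma_{\theta_1,\theta_2}([-1,1])$, and hence $\mathcal{O}(\mathfrak{N})=\{V_\varphi:\varphi\in\varGamma_{\theta_1,\theta_2}([-1,1])\}$ is a subgroup of $\mathrm{Col}(\mathfrak{N})$; (iii) $\mathrm{Col}(\mathfrak{N})=\mathrm{Grp}(\mathrm{Alg}(\mathfrak{N}))\rtimes\mathcal{O}(\mathfrak{N})$.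
   Context: $\mathrm{supp}(f)=\overline{\{x:f(x)\neq0\}}$. In (i), the condition $\theta_1^{-1}\circ\varphi\circ\theta_1=\theta_2^{-1}\circ\varphi\circ\theta_2$ is understood as an equality of maps on $[0,1]$ (in particular both sides must be defined). $\mathrm{Alg}(\mathfrak{F})$ is the set of bounded operators leaving every subspace of $\mathfrak{F}$ invariant; $\mathrm{Grp}(\mathcal{A})$ is the group of invertible $S\in\mathcal{A}$ with $S^{-1}\in\mathcal{A}$. $\mathrm{Col}(\mathfrak{F})$ is the group of invertible bounded $S$ such that for every closed subspace $\mathscr{M}$: $\mathscr{M}\in\mathfrak{F}$ iff $S\mathscr{M}\in\mathfrak{F}$. For a subgroup $\mathcal{O}\subseteq\mathrm{Col}(\mathfrak{F})$, $\mathrm{Col}(\mathfrak{F})=\mathrm{Grp}(\mathrm{Alg}(\mathfrak{F}))\rtimes\mathcal{O}$ means $\mathrm{Col}(\mathfrak{F})=\{AT:A\in\mathrm{Grp}(\mathrm{Alg}(\mathfrak{F})),T\in\mathcal{O}\}$ and $\mathrm{Grp}(\mathrm{Alg}(\mathfrak{F}))\cap\mathcal{O}=\{I\}$. *)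

theory Defs
  imports "HOL-Analysis.Analysis" "HOL-Algebra.Group"
begin

text \<open>Elements of C_0[-1,1] are represented by functions real => complex that are
continuous on [-1,1], vanish at -1 and 1, and are normalised to be 0 outside [-1,1]
(so that equality of elements is plain function equality).\<close>

definition C0 :: "(real \<Rightarrow> complex) set" where
  "C0 = {f. continuous_on {-1..1} f \<and> f (-1) = 0 \<and> f 1 = 0 \<and> (\<forall>x. x \<notin> {-1..1} \<longrightarrow> f x = 0)}"

definition supnorm :: "(real \<Rightarrow> complex) \<Rightarrow> real" where
  "supnorm f = Sup ((\<lambda>x. cmod (f x)) ` {-1..1})"

definition fadd :: "(real \<Rightarrow> complex) \<Rightarrow> (real \<Rightarrow> complex) \<Rightarrow> (real \<Rightarrow> complex)" where
  "fadd f g = (\<lambda>x. f x + g x)"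

definition fdiff :: "(real \<Rightarrow> complex) \<Rightarrow> (real \<Rightarrow> complex) \<Rightarrow> (real \<Rightarrow> complex)" where
  "fdiff f g = (\<lambda>x. f x - g x)"

definition fscale :: "complex \<Rightarrow> (real \<Rightarrow> complex) \<Rightarrow> (real \<Rightarrow> complex)" where
  "fscale c f = (\<lambda>x. c * f x)"

definition fzero :: "real \<Rightarrow> complex" where
  "fzero = (\<lambda>x. 0)"

definition supp :: "(real \<Rightarrow> complex) \<Rightarrow> real set" where
  "supp f = closure {x. f x \<noteq> 0}"

definition closed_subspace :: "(real \<Rightarrow> complex) set \<Rightarrow> bool" where
  "closed_subspace M \<longleftrightarrow> M \<subseteq> C0 \<and> fzero \<in> M
     \<and> (\<forall>f\<in>M. \<forall>g\<in>M. fadd f g \<in> M) \<and> (\<forall>c. \<forall>f\<in>M. fscale c f \<in> M)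
     \<and> (\<forall>u g. (\<forall>n. u n \<in> M) \<and> g \<in> C0 \<and> (\<lambda>n. supnorm (fdiff (u n) g)) \<longlonglongrightarrow> 0 \<longrightarrow> g \<in> M)"

text \<open>Bounded linear operators, represented extensionally (value fzero off C0).\<close>
definition BOp :: "((real \<Rightarrow> complex) \<Rightarrow> (real \<Rightarrow> complex)) set" where
  "BOp = {T. (\<forall>f\<in>C0. T f \<in> C0)
       \<and> (\<forall>f\<in>C0. \<forall>g\<in>C0. T (fadd f g) = fadd (T f) (T g))
       \<and> (\<forall>c. \<forall>f\<in>C0. T (fscale c f) = fscale c (T f))
       \<and> (\<exists>K. \<forall>f\<in>C0. supnorm (T f) \<le> K * supnorm f)
       \<and> (\<forall>f. f \<notin> C0 \<longrightarrow> T f = fzero)}"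

definition Iop :: "(real \<Rightarrow> complex) \<Rightarrow> (real \<Rightarrow> complex)" where
  "Iop = (\<lambda>f. if f \<in> C0 then f else fzero)"

definition invertible_in :: "((real \<Rightarrow> complex) \<Rightarrow> (real \<Rightarrow> complex)) set
    \<Rightarrow> ((real \<Rightarrow> complex) \<Rightarrow> (real \<Rightarrow> complex)) \<Rightarrow> bool" where
  "invertible_in A S \<longleftrightarrow> (\<exists>S'\<in>A. S \<circ> S' = Iop \<and> S' \<circ> S = Iop)"

definition Alg :: "(real \<Rightarrow> complex) set set \<Rightarrow> ((real \<Rightarrow> complex) \<Rightarrow> (real \<Rightarrow> complex)) set" where
  "Alg F = {T \<in> BOp. \<forall>M\<in>F. T ` M \<subseteq> M}"

definition Grp :: "((real \<Rightarrow> complex) \<Rightarrow> (real \<Rightarrow> complex)) set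
    \<Rightarrow> ((real \<Rightarrow> complex) \<Rightarrow> (real \<Rightarrow> complex)) set" where
  "Grp A = {S \<in> A. invertible_in A S}"

definition Col :: "(real \<Rightarrow> complex) set set \<Rightarrow> ((real \<Rightarrow> complex) \<Rightarrow> (real \<Rightarrow> complex)) set" where
  "Col F = {S \<in> BOp. invertible_in BOp S
      \<and> (\<forall>M. closed_subspace M \<longrightarrow> (M \<in> F \<longleftrightarrow> S ` M \<in> F))}"

definition ColG :: "(real \<Rightarrow> complex) set set
    \<Rightarrow> ((real \<Rightarrow> complex) \<Rightarrow> (real \<Rightarrow> complex)) monoid" where
  "ColG F = \<lparr>carrier = Col F, mult = (\<lambda>S T. S \<circ> T), one = Iop\<rparr>"

definition Nt :: "(real \<Rightarrow> real) \<Rightarrow> (real \<Rightarrow> real) \<Rightarrow> real \<Rightarrow> (real \<Rightarrow> complex) set" where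
  "Nt \<theta>1 \<theta>2 t = {f \<in> C0. supp f \<subseteq> {\<theta>1 t..\<theta>2 t}}"

definition Nest :: "(real \<Rightarrow> real) \<Rightarrow> (real \<Rightarrow> real) \<Rightarrow> (real \<Rightarrow> complex) set set" where
  "Nest \<theta>1 \<theta>2 = Nt \<theta>1 \<theta>2 ` {0..1}"

text \<open>Increasing bijections of [-1,1], extended by the identity outside [-1,1]
(so that the group operation is plain composition).\<close>
definition Gamma :: "(real \<Rightarrow> real) set" where
  "Gamma = {\<phi>. bij_betw \<phi> {-1..1} {-1..1} \<and> strict_mono_on {-1..1} \<phi>
              \<and> (\<forall>x. x \<notin> {-1..1} \<longrightarrow> \<phi> x = x)}"

definition GammaG :: "(real \<Rightarrow> real) monoid" where
  "GammaG = \<lparr>carrier = Gamma, mult = (\<lambda>\<phi> \<psi>. \<phi> \<circ> \<psi>), one = id\<rparr>"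

text \<open>theta1^{-1} o phi o theta1 = theta2^{-1} o phi o theta2 on [0,1], both sides defined.\<close>
definition Gamma_th :: "(real \<Rightarrow> real) \<Rightarrow> (real \<Rightarrow> real) \<Rightarrow> (real \<Rightarrow> real) set" where
  "Gamma_th \<theta>1 \<theta>2 = {\<phi> \<in> Gamma. \<forall>t\<in>{0..1}.
       \<phi> (\<theta>1 t) \<in> {-1..0} \<and> \<phi> (\<theta>2 t) \<in> {0..1}
     \<and> inv_into {0..1} \<theta>1 (\<phi> (\<theta>1 t)) = inv_into {0..1} \<theta>2 (\<phi> (\<theta>2 t))}"

definition Vop :: "(real \<Rightarrow> real) \<Rightarrow> (real \<Rightarrow> complex) \<Rightarrow> (real \<Rightarrow> complex)" where
  "Vop \<phi> = (\<lambda>f. if f \<in> C0 then (\<lambda>x. if x \<in> {-1..1} then f (\<phi> x) else 0) else fzero)"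

end

theory Submission
  imports Defs
begin

text \<open>
  A collineation \<open>S\<close> of the nest permutes its members, and since \<open>N s \<subseteq> N t\<close> iff
  \<open>s \<le> t\<close>, it does so through an increasing bijection \<sigma> of \<open>[0,1]\<close>:
  \<open>S ` N t = N (\<sigma> t)\<close>. Gluing \<open>\<theta>1 \<circ> \<sigma> \<circ> \<theta>1\<inverse>\<close> on \<open>[-1,0]\<close> to
  \<open>\<theta>2 \<circ> \<sigma> \<circ> \<theta>2\<inverse>\<close> on \<open>[0,1]\<close> gives \<open>\<kappa> \<in> Gamma_th \<theta>1 \<theta>2\<close> with
  \<open>V\<^sub>\<kappa> (N (\<sigma> t)) = N t\<close>; so \<open>S V\<^sub>\<kappa>\<close> fixes every member of the nest, lies in
  \<open>Grp (Alg N)\<close>, and \<open>S = (S V\<^sub>\<kappa>) V\<^sub>\<kappa>\<inverse>\<close>.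

  Everything else rests on one computation: \<open>V\<^sub>\<phi>\<close> maps the functions supported in
  \<open>[\<phi> a, \<phi> b]\<close> onto those supported in \<open>[a, b]\<close>, and such support classes determine the
  interval. Hence \<open>V\<^sub>\<phi>\<close> permutes the nest exactly when \<phi> maps every endpoint pair
  \<open>(\<theta>1 t, \<theta>2 t)\<close> to an endpoint pair, which is a restatement of
  \<open>\<theta>1\<inverse> \<phi> \<theta>1 = \<theta>2\<inverse> \<phi> \<theta>2\<close>; and if \<open>V\<^sub>\<phi>\<close> fixes every \<open>N t\<close>, then \<phi> fixes
  every endpoint, so \<open>\<phi> = id\<close>.
\<close>

section \<open>Increasing bijections of \<open>[-1,1]\<close>\<close>

lemma strict_mono_on_bij_betw_endpoints:
  fixes f :: "'a::linorder \<Rightarrow> 'b::linorder"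
  assumes bij: "bij_betw f {a..b} {c..d}" and mono: "strict_mono_on {a..b} f" and "a \<le> b"
  shows "f a = c" "f b = d"
proof -
  have ends: "f a \<in> {c..d}" "f b \<in> {c..d}"
    using bij_betw_apply[OF bij, of a] bij_betw_apply[OF bij, of b] \<open>a \<le> b\<close> by auto
  then have "c \<in> f ` {a..b}" "d \<in> f ` {a..b}"
    using bij_betw_imp_surj_on[OF bij] by auto
  then obtain x y where "x \<in> {a..b}" "c = f x" "y \<in> {a..b}" "d = f y"
    by blast
  then have "f a \<le> c" "d \<le> f b"
    using strict_mono_on_leD[OF mono, of a x] strict_mono_on_leD[OF mono, of y b] \<open>a \<le> b\<close> by auto
  then show "f a = c" "f b = d"
    using ends by auto
qed

lemma strict_mono_on_inv_into:
  fixes f :: "'a::linorder \<Rightarrow> 'b::linorder"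
  assumes bij: "bij_betw f A B" and mono: "strict_mono_on A f"
  shows "strict_mono_on B (inv_into A f)"
proof (rule strict_mono_onI)
  fix x y assume "x \<in> B" "y \<in> B" "x < y"
  moreover have "inv_into A f x \<in> A" "inv_into A f y \<in> A"
    using \<open>x \<in> B\<close> \<open>y \<in> B\<close> bij_betw_apply[OF bij_betw_inv_into[OF bij]] by auto
  ultimately show "inv_into A f x < inv_into A f y"
    using strict_mono_on_less[OF mono] bij_betw_inv_into_right[OF bij] by metis
qed

lemma GammaD:
  assumes "\<phi> \<in> Gamma"
  shows "bij_betw \<phi> {-1..1} {-1..1}" "strict_mono_on {-1..1} \<phi>" "x \<notin> {-1..1} \<Longrightarrow> \<phi> x = x"
  using assms unfolding Gamma_def by auto

lemma GammaI:
  assumes "\<phi> ` {-1..1} = {-1..1}" "strict_mono_on {-1..1} \<phi>" "\<And>x. x \<notin> {-1..1} \<Longrightarrow> \<phi> x = x"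
  shows "\<phi> \<in> Gamma"
  using assms strict_mono_on_imp_inj_on unfolding Gamma_def bij_betw_def by blast

lemma Gamma_in: "\<phi> \<in> Gamma \<Longrightarrow> x \<in> {-1..1} \<Longrightarrow> \<phi> x \<in> {-1..1}"
  by (rule bij_betw_apply[OF GammaD(1)])

lemma Gamma_image: "\<phi> \<in> Gamma \<Longrightarrow> \<phi> ` {-1..1} = {-1..1}"
  by (rule bij_betw_imp_surj_on[OF GammaD(1)])

lemma Gamma_endpoints:
  assumes "\<phi> \<in> Gamma"
  shows "\<phi> (-1) = -1" "\<phi> 1 = 1"
  using strict_mono_on_bij_betw_endpoints[OF GammaD(1,2)[OF assms]] by simp_all

lemma id_Gamma: "id \<in> Gamma"
  by (rule GammaI) (auto simp: strict_mono_on_id)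

lemma Gamma_comp:
  assumes "\<phi> \<in> Gamma" "\<psi> \<in> Gamma"
  shows "\<phi> \<circ> \<psi> \<in> Gamma"
proof (rule GammaI)
  show "(\<phi> \<circ> \<psi>) ` {-1..1} = {-1..1}"
    using Gamma_image[OF assms(1)] Gamma_image[OF assms(2)] by (metis image_comp)
  show "strict_mono_on {-1..1} (\<phi> \<circ> \<psi>)"
    using monotone_on_o[OF GammaD(2)[OF assms(1)] GammaD(2)[OF assms(2)]] Gamma_image[OF assms(2)]
    by simp
qed (simp add: GammaD(3)[OF assms(1)] GammaD(3)[OF assms(2)])

definition Gamma_inv :: "(real \<Rightarrow> real) \<Rightarrow> real \<Rightarrow> real" where
  "Gamma_inv \<phi> x = (if x \<in> {-1..1} then inv_into {-1..1} \<phi> x else x)"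

lemma
  assumes "\<phi> \<in> Gamma"
  shows Gamma_inv_Gamma: "Gamma_inv \<phi> \<in> Gamma"
    and Gamma_inv_right: "\<phi> (Gamma_inv \<phi> x) = x"
    and Gamma_inv_left: "Gamma_inv \<phi> (\<phi> x) = x"
proof -
  note bij = GammaD(1)[OF assms]
  show "\<phi> (Gamma_inv \<phi> x) = x"
    using bij_betw_inv_into_right[OF bij] GammaD(3)[OF assms] by (simp add: Gamma_inv_def)
  show "Gamma_inv \<phi> (\<phi> x) = x"
    using bij_betw_inv_into_left[OF bij] Gamma_in[OF assms] GammaD(3)[OF assms]
    by (cases "x \<in> {-1..1}") (auto simp: Gamma_inv_def)
  have "Gamma_inv \<phi> ` {-1..1} = inv_into {-1..1} \<phi> ` {-1..1}"
    by (simp add: Gamma_inv_def)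
  also have "\<dots> = {-1..1}"
    using bij_betw_imp_surj_on[OF bij_betw_inv_into[OF bij]] .
  finally have "Gamma_inv \<phi> ` {-1..1} = {-1..1}" .
  moreover have "strict_mono_on {-1..1} (Gamma_inv \<phi>)"
    using strict_mono_onD[OF strict_mono_on_inv_into[OF bij GammaD(2)[OF assms]]]
    by (intro strict_mono_onI) (simp add: Gamma_inv_def)
  ultimately show "Gamma_inv \<phi> \<in> Gamma"
    by (intro GammaI) (auto simp: Gamma_inv_def)
qed

lemma group_GammaG: "group GammaG"
proof (rule groupI)
  fix \<phi> assume "\<phi> \<in> carrier GammaG"
  then have "Gamma_inv \<phi> \<in> carrier GammaG" "Gamma_inv \<phi> \<otimes>\<^bsub>GammaG\<^esub> \<phi> = \<one>\<^bsub>GammaG\<^esub>"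
    using Gamma_inv_Gamma Gamma_inv_left by (auto simp: GammaG_def fun_eq_iff)
  then show "\<exists>y\<in>carrier GammaG. y \<otimes>\<^bsub>GammaG\<^esub> \<phi> = \<one>\<^bsub>GammaG\<^esub>"
    by blast
qed (auto simp: GammaG_def Gamma_comp id_Gamma o_assoc)

lemma inv_GammaG: "\<phi> \<in> Gamma \<Longrightarrow> inv\<^bsub>GammaG\<^esub> \<phi> = Gamma_inv \<phi>"
  using group.inv_equality[OF group_GammaG, of "Gamma_inv \<phi>" \<phi>] Gamma_inv_Gamma[of \<phi>]
    Gamma_inv_left[of \<phi>] by (simp add: GammaG_def fun_eq_iff)

lemma Gamma_continuous:
  assumes "\<phi> \<in> Gamma"
  shows "continuous_on UNIV \<phi>"
proof (rule continuous_onI_mono)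
  show "open (range \<phi>)"
    using surjI[of \<phi> "Gamma_inv \<phi>"] Gamma_inv_right[OF assms] by simp
  fix x y :: real assume "x \<le> y"
  note in_out = Gamma_in[OF assms] GammaD(3)[OF assms]
  show "\<phi> x \<le> \<phi> y"
  proof (cases "x \<in> {-1..1}"; cases "y \<in> {-1..1}")
    assume "x \<in> {-1..1}" "y \<in> {-1..1}"
    then show ?thesis using strict_mono_on_leD[OF GammaD(2)[OF assms]] \<open>x \<le> y\<close> by blast
  next
    assume "x \<in> {-1..1}" "y \<notin> {-1..1}"
    then show ?thesis using in_out[of x] in_out[of y] \<open>x \<le> y\<close> by auto
  next
    assume "x \<notin> {-1..1}" "y \<in> {-1..1}"
    then show ?thesis using in_out[of x] in_out[of y] \<open>x \<le> y\<close> by auto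
  next
    assume "x \<notin> {-1..1}" "y \<notin> {-1..1}"
    then show ?thesis using in_out[of x] in_out[of y] \<open>x \<le> y\<close> by auto
  qed
qed

definition Gamma_glue :: "(real \<Rightarrow> real) \<Rightarrow> (real \<Rightarrow> real) \<Rightarrow> real \<Rightarrow> real" where
  "Gamma_glue f g x = (if x \<in> {-1..0} then f x else if x \<in> {0..1} then g x else x)"

lemma
  assumes "bij_betw f {-1..0} {-1..0}" "strict_mono_on {-1..0} f"
    and "bij_betw g {0..1} {0..1}" "strict_mono_on {0..1} g"
  shows Gamma_glue_left: "x \<in> {-1..0} \<Longrightarrow> Gamma_glue f g x = f x"
    and Gamma_glue_right: "x \<in> {0..1} \<Longrightarrow> Gamma_glue f g x = g x"
proof -
  have "f 0 = 0" "g 0 = 0"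
    using strict_mono_on_bij_betw_endpoints(2)[OF assms(1,2)]
      strict_mono_on_bij_betw_endpoints(1)[OF assms(3,4)] by simp_all
  then show "x \<in> {-1..0} \<Longrightarrow> Gamma_glue f g x = f x" "x \<in> {0..1} \<Longrightarrow> Gamma_glue f g x = g x"
    by (auto simp: Gamma_glue_def)
qed

lemma Gamma_glue_Gamma:
  assumes f: "bij_betw f {-1..0} {-1..0}" "strict_mono_on {-1..0} f"
    and g: "bij_betw g {0..1} {0..1}" "strict_mono_on {0..1} g"
  shows "Gamma_glue f g \<in> Gamma"
proof (rule GammaI)
  note left = Gamma_glue_left[OF f g] and right = Gamma_glue_right[OF f g]
  have "Gamma_glue f g ` {-1..1} = Gamma_glue f g ` {-1..0} \<union> Gamma_glue f g ` {0..1}"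
    by (simp add: image_Un[symmetric] ivl_disj_un_two_touch(4))
  also have "\<dots> = f ` {-1..0} \<union> g ` {0..1}"
    using left right by simp
  also have "\<dots> = {-1..1}"
    using bij_betw_imp_surj_on[OF f(1)] bij_betw_imp_surj_on[OF g(1)] by auto
  finally show "Gamma_glue f g ` {-1..1} = {-1..1}" .
  show "strict_mono_on {-1..1} (Gamma_glue f g)"
  proof (rule strict_mono_onI)
    fix x y :: real assume x: "x \<in> {-1..1}" and y: "y \<in> {-1..1}" and "x < y"
    consider "y \<le> 0" | "0 \<le> x" | "x < 0" "0 < y"
      by linarith
    then show "Gamma_glue f g x < Gamma_glue f g y"
    proof cases
      case 1
      then show ?thesis using x y \<open>x < y\<close> left strict_mono_onD[OF f(2)] by simp
    next
      case 2
      then show ?thesis using x y \<open>x < y\<close> right strict_mono_onD[OF g(2)] by simp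
    next
      case 3
      have "Gamma_glue f g x < Gamma_glue f g 0"
        using 3 x left strict_mono_onD[OF f(2)] by simp
      also have "\<dots> < Gamma_glue f g y"
        using 3 y right strict_mono_onD[OF g(2)] by simp
      finally show ?thesis .
    qed
  qed
qed (auto simp: Gamma_glue_def)

section \<open>Bounded operators on \<open>C\<^sub>0[-1,1]\<close>\<close>

lemma C0D:
  assumes "f \<in> C0"
  shows "continuous_on {-1..1} f" "f (-1) = 0" "f 1 = 0" "x \<notin> {-1..1} \<Longrightarrow> f x = 0"
  using assms unfolding C0_def by auto

lemma C0_fadd: "f \<in> C0 \<Longrightarrow> g \<in> C0 \<Longrightarrow> fadd f g \<in> C0"
  unfolding C0_def fadd_def by (auto intro: continuous_on_add)

lemma C0_fscale: "f \<in> C0 \<Longrightarrow> fscale c f \<in> C0"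
  unfolding C0_def fscale_def by (auto intro: continuous_on_mult continuous_on_const)

lemma C0_fdiff: "f \<in> C0 \<Longrightarrow> g \<in> C0 \<Longrightarrow> fdiff f g \<in> C0"
  unfolding C0_def fdiff_def by (auto intro: continuous_on_diff)

lemma C0_fzero: "fzero \<in> C0"
  unfolding C0_def fzero_def by auto

lemma norm_le_supnorm:
  assumes "f \<in> C0" "x \<in> {-1..1}"
  shows "cmod (f x) \<le> supnorm f"
proof -
  have "compact ((\<lambda>x. cmod (f x)) ` {-1..1})"
    using C0D(1)[OF assms(1)] by (intro compact_continuous_image continuous_on_norm) auto
  then have "bdd_above ((\<lambda>x. cmod (f x)) ` {-1..1})"
    by (intro bounded_imp_bdd_above compact_imp_bounded)
  then show ?thesis
    unfolding supnorm_def using assms(2) by (intro cSup_upper) auto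
qed

lemma supnorm_nonneg:
  assumes "f \<in> C0"
  shows "0 \<le> supnorm f"
proof -
  have "cmod (f 0) \<le> supnorm f"
    using norm_le_supnorm[OF assms] by simp
  then show ?thesis
    using norm_ge_zero[of "f 0"] by linarith
qed

lemma supnorm_tendsto_zero_imp_vanishing:
  assumes "\<And>n. u n \<in> C0" "g \<in> C0" "(\<lambda>n. supnorm (fdiff (u n) g)) \<longlonglongrightarrow> 0"
    and "\<And>n. u n x = 0"
  shows "g x = 0"
proof (cases "x \<in> {-1..1}")
  case True
  have "cmod (g x) \<le> supnorm (fdiff (u n) g)" for n
    using norm_le_supnorm[OF C0_fdiff[OF assms(1,2)] True] assms(4) by (simp add: fdiff_def)
  then have "cmod (g x) \<le> 0"
    by (intro LIMSEQ_le_const[OF assms(3)]) auto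
  then show ?thesis by simp
next
  case False
  then show ?thesis using C0D(4)[OF assms(2)] by simp
qed

lemma BOpD:
  assumes "T \<in> BOp"
  shows "f \<in> C0 \<Longrightarrow> T f \<in> C0"
    "f \<in> C0 \<Longrightarrow> g \<in> C0 \<Longrightarrow> T (fadd f g) = fadd (T f) (T g)"
    "f \<in> C0 \<Longrightarrow> T (fscale c f) = fscale c (T f)"
    "f \<notin> C0 \<Longrightarrow> T f = fzero"
  using assms unfolding BOp_def by auto

lemma BOp_bound:
  assumes "T \<in> BOp"
  obtains K where "K \<ge> 0" "\<And>f. f \<in> C0 \<Longrightarrow> supnorm (T f) \<le> K * supnorm f"
proof -
  obtain K where K: "\<And>f. f \<in> C0 \<Longrightarrow> supnorm (T f) \<le> K * supnorm f"
    using assms unfolding BOp_def by blast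
  have "supnorm (T f) \<le> max K 0 * supnorm f" if "f \<in> C0" for f
    using K[OF that] supnorm_nonneg[OF that] by (metis max.cobounded1 mult_right_mono order_trans)
  then show ?thesis using that[of "max K 0"] by auto
qed

lemma BOp_fzero:
  assumes "T \<in> BOp"
  shows "T fzero = fzero"
proof -
  have "T (fscale 0 fzero) = fscale 0 (T fzero)"
    using BOpD(3)[OF assms C0_fzero] .
  then show ?thesis
    by (simp add: fscale_def fzero_def)
qed

lemma BOp_fdiff:
  assumes "T \<in> BOp" "f \<in> C0" "g \<in> C0"
  shows "T (fdiff f g) = fdiff (T f) (T g)"
proof -
  have "fdiff f g = fadd f (fscale (-1) g)" "fdiff (T f) (T g) = fadd (T f) (fscale (-1) (T g))"
    by (simp_all add: fdiff_def fadd_def fscale_def)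
  then show ?thesis
    using BOpD(2,3)[OF assms(1)] assms(2,3) C0_fscale by simp
qed

lemma BOp_comp:
  assumes "S \<in> BOp" "T \<in> BOp"
  shows "S \<circ> T \<in> BOp"
proof -
  obtain K1 where K1: "K1 \<ge> 0" "\<And>f. f \<in> C0 \<Longrightarrow> supnorm (S f) \<le> K1 * supnorm f"
    using BOp_bound[OF assms(1)] by auto
  obtain K2 where K2: "\<And>f. f \<in> C0 \<Longrightarrow> supnorm (T f) \<le> K2 * supnorm f"
    using BOp_bound[OF assms(2)] by auto
  have "supnorm (S (T f)) \<le> (K1 * K2) * supnorm f" if "f \<in> C0" for f
  proof -
    have "supnorm (S (T f)) \<le> K1 * supnorm (T f)"
      using K1(2) BOpD(1)[OF assms(2) that] by auto
    also have "\<dots> \<le> K1 * (K2 * supnorm f)"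
      using K2[OF that] K1(1) by (simp add: mult_left_mono)
    finally show ?thesis by simp
  qed
  then show ?thesis
    using assms unfolding BOp_def by (auto simp: C0_fadd C0_fscale BOp_fzero[OF assms(1)])
qed

lemma Iop_BOp: "Iop \<in> BOp"
  unfolding BOp_def Iop_def by (auto simp: C0_fadd C0_fscale C0_fzero intro: exI[of _ 1])

lemma Iop_comp:
  assumes "T \<in> BOp"
  shows "Iop \<circ> T = T"
proof
  fix f
  show "(Iop \<circ> T) f = T f"
    using BOpD(1,4)[OF assms, of f] C0_fzero by (cases "f \<in> C0") (auto simp: Iop_def)
qed

lemma comp_Iop:
  assumes "T \<in> BOp"
  shows "T \<circ> Iop = T"
proof
  fix f
  show "(T \<circ> Iop) f = T f"
    using BOpD(4)[OF assms, of f] BOp_fzero[OF assms] by (cases "f \<in> C0") (auto simp: Iop_def)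
qed

lemma inverse_op_apply:
  assumes "S \<circ> S' = Iop" "f \<in> C0"
  shows "S (S' f) = f"
  using fun_cong[OF assms(1), of f] assms(2) by (simp add: Iop_def)

lemma inverse_op_image:
  assumes "S \<circ> S' = Iop" "M \<subseteq> C0"
  shows "S ` S' ` M = M"
  using inverse_op_apply[OF assms(1)] assms(2) by (force simp: image_image)

lemma closed_subspaceD:
  assumes "closed_subspace M"
  shows "M \<subseteq> C0" "fzero \<in> M" "f \<in> M \<Longrightarrow> g \<in> M \<Longrightarrow> fadd f g \<in> M"
    "f \<in> M \<Longrightarrow> fscale c f \<in> M"
    "(\<And>n. u n \<in> M) \<Longrightarrow> g \<in> C0 \<Longrightarrow> (\<lambda>n. supnorm (fdiff (u n) g)) \<longlonglongrightarrow> 0 \<Longrightarrow> g \<in> M"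
  using assms unfolding closed_subspace_def by blast+

lemma BOp_tendsto:
  assumes T: "T \<in> BOp" and u: "\<And>n. u n \<in> C0" and g: "g \<in> C0"
    and lim: "(\<lambda>n. supnorm (fdiff (u n) g)) \<longlonglongrightarrow> 0"
  shows "(\<lambda>n. supnorm (fdiff (T (u n)) (T g))) \<longlonglongrightarrow> 0"
proof -
  obtain K where K: "\<And>f. f \<in> C0 \<Longrightarrow> supnorm (T f) \<le> K * supnorm f"
    using BOp_bound[OF T] by blast
  show ?thesis
  proof (rule tendsto_sandwich[where f="\<lambda>_. 0" and h="\<lambda>n. K * supnorm (fdiff (u n) g)"])
    show "\<forall>\<^sub>F n in sequentially. 0 \<le> supnorm (fdiff (T (u n)) (T g))"
      using u g by (intro always_eventually allI supnorm_nonneg C0_fdiff BOpD(1)[OF T])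
    have "supnorm (fdiff (T (u n)) (T g)) \<le> K * supnorm (fdiff (u n) g)" for n
      using BOp_fdiff[OF T u g] K[OF C0_fdiff[OF u g]] by simp
    then show "\<forall>\<^sub>F n in sequentially. supnorm (fdiff (T (u n)) (T g)) \<le> K * supnorm (fdiff (u n) g)"
      by simp
    show "(\<lambda>n. K * supnorm (fdiff (u n) g)) \<longlonglongrightarrow> 0"
      using tendsto_mult_right_zero[OF lim] .
  qed simp
qed

lemma closed_subspace_image:
  assumes S: "S \<in> BOp" and S': "S' \<in> BOp" and inv: "S \<circ> S' = Iop" "S' \<circ> S = Iop"
    and M: "closed_subspace M"
  shows "closed_subspace (S ` M)"
proof -
  note Md = closed_subspaceD[OF M]
  have sub: "S ` M \<subseteq> C0"
    using Md(1) BOpD(1)[OF S] by blast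
  have preimage: "S' f \<in> M" if "f \<in> S ` M" for f
    using that inverse_op_apply[OF inv(2)] Md(1) by auto
  have lim: "g \<in> S ` M"
    if u: "\<And>n. u n \<in> S ` M" and g: "g \<in> C0" and t: "(\<lambda>n. supnorm (fdiff (u n) g)) \<longlonglongrightarrow> 0"
    for u g
  proof -
    have uC: "u n \<in> C0" for n
      using u sub by blast
    have "S' g \<in> M"
      using Md(5)[of "\<lambda>n. S' (u n)", OF preimage[OF u] BOpD(1)[OF S' g] BOp_tendsto[OF S' uC g t]] .
    then show ?thesis
      using inverse_op_apply[OF inv(1) g] by (metis image_eqI)
  qed
  have "fadd f g \<in> S ` M" if fg: "f \<in> S ` M" "g \<in> S ` M" for f g
  proof -
    obtain f' g' where "f' \<in> M" "g' \<in> M" "f = S f'" "g = S g'"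
      using fg by blast
    then show ?thesis
      using BOpD(2)[OF S, of f' g'] Md(1,3) by (metis image_eqI subsetD)
  qed
  moreover have "fscale c f \<in> S ` M" if f: "f \<in> S ` M" for c f
  proof -
    obtain f' where "f' \<in> M" "f = S f'"
      using f by blast
    then show ?thesis
      using BOpD(3)[OF S, of f' c] Md(1,4) by (metis image_eqI subsetD)
  qed
  moreover have "fzero \<in> S ` M"
    using BOp_fzero[OF S] Md(2) by (metis image_eqI)
  ultimately show ?thesis
    unfolding closed_subspace_def using sub lim by blast
qed

section \<open>Composition operators and supports\<close>

lemma Vop_C0:
  assumes "\<phi> \<in> Gamma" "f \<in> C0"
  shows "Vop \<phi> f \<in> C0"
proof -
  have "continuous_on {-1..1} (f \<circ> \<phi>)"
    using continuous_on_subset[OF Gamma_continuous[OF assms(1)]] C0D(1)[OF assms(2)]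
      Gamma_image[OF assms(1)] by (intro continuous_on_compose) auto
  then have "continuous_on {-1..1} (Vop \<phi> f)"
    by (rule continuous_on_cong[THEN iffD1, rotated 2]) (auto simp: Vop_def assms(2))
  then show ?thesis
    unfolding C0_def using assms(2) Gamma_endpoints[OF assms(1)] C0D(2,3)[OF assms(2)]
    by (auto simp: Vop_def)
qed

lemma Vop_supnorm:
  assumes "\<phi> \<in> Gamma" "f \<in> C0"
  shows "supnorm (Vop \<phi> f) = supnorm f"
proof -
  have "(\<lambda>x. cmod (Vop \<phi> f x)) ` {-1..1} = (\<lambda>x. cmod (f x)) ` (\<phi> ` {-1..1})"
    using assms(2) by (auto simp: Vop_def image_image)
  then show ?thesis
    unfolding supnorm_def using Gamma_image[OF assms(1)] by simp
qed

lemma Vop_BOp: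
  assumes "\<phi> \<in> Gamma"
  shows "Vop \<phi> \<in> BOp"
proof -
  have "Vop \<phi> (fadd f g) = fadd (Vop \<phi> f) (Vop \<phi> g)" if "f \<in> C0" "g \<in> C0" for f g
    using C0_fadd[OF that] that by (simp add: Vop_def fadd_def fun_eq_iff)
  moreover have "Vop \<phi> (fscale c f) = fscale c (Vop \<phi> f)" if "f \<in> C0" for c f
    using C0_fscale[OF that] that by (simp add: Vop_def fscale_def fun_eq_iff)
  ultimately show ?thesis
    unfolding BOp_def using Vop_C0[OF assms] Vop_supnorm[OF assms]
    by (auto simp: Vop_def intro: exI[of _ 1])
qed

lemma Vop_comp:
  assumes "\<phi> \<in> Gamma" "\<psi> \<in> Gamma"
  shows "Vop \<phi> \<circ> Vop \<psi> = Vop (\<psi> \<circ> \<phi>)"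
proof
  fix f
  show "(Vop \<phi> \<circ> Vop \<psi>) f = Vop (\<psi> \<circ> \<phi>) f"
    using Vop_C0[OF assms(2), of f] Gamma_in[OF assms(1)] C0_fzero
    by (cases "f \<in> C0") (auto simp: Vop_def fzero_def fun_eq_iff)
qed

lemma Vop_id: "Vop id = Iop"
  by (auto simp: Vop_def Iop_def C0_def fun_eq_iff)

lemma
  assumes "\<phi> \<in> Gamma"
  shows Vop_Gamma_inv_right: "Vop \<phi> \<circ> Vop (Gamma_inv \<phi>) = Iop"
    and Vop_Gamma_inv_left: "Vop (Gamma_inv \<phi>) \<circ> Vop \<phi> = Iop"
proof -
  have "Gamma_inv \<phi> \<circ> \<phi> = id" "\<phi> \<circ> Gamma_inv \<phi> = id"
    using Gamma_inv_left[OF assms] Gamma_inv_right[OF assms] by (simp_all add: fun_eq_iff)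
  then show "Vop \<phi> \<circ> Vop (Gamma_inv \<phi>) = Iop" "Vop (Gamma_inv \<phi>) \<circ> Vop \<phi> = Iop"
    using Vop_comp[OF assms Gamma_inv_Gamma[OF assms]] Vop_comp[OF Gamma_inv_Gamma[OF assms] assms]
      Vop_id by simp_all
qed

definition C0_supp :: "real \<Rightarrow> real \<Rightarrow> (real \<Rightarrow> complex) set" where
  "C0_supp a b = {f \<in> C0. supp f \<subseteq> {a..b}}"

lemma supp_subset_atLeastAtMost_iff:
  "supp f \<subseteq> {a..b} \<longleftrightarrow> (\<forall>x. f x \<noteq> 0 \<longrightarrow> a \<le> x \<and> x \<le> b)"
proof
  assume "supp f \<subseteq> {a..b}"
  then show "\<forall>x. f x \<noteq> 0 \<longrightarrow> a \<le> x \<and> x \<le> b"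
    unfolding supp_def using closure_subset[of "{x. f x \<noteq> 0}"] by auto
next
  assume "\<forall>x. f x \<noteq> 0 \<longrightarrow> a \<le> x \<and> x \<le> b"
  then show "supp f \<subseteq> {a..b}"
    unfolding supp_def by (intro closure_minimal) auto
qed

lemma C0_supp_iff: "f \<in> C0_supp a b \<longleftrightarrow> f \<in> C0 \<and> (\<forall>x. f x \<noteq> 0 \<longrightarrow> a \<le> x \<and> x \<le> b)"
  by (simp add: C0_supp_def supp_subset_atLeastAtMost_iff)

lemma C0_supp_subset_C0: "C0_supp a b \<subseteq> C0"
  by (auto simp: C0_supp_def)

lemma C0_supp_mono: "a' \<le> a \<Longrightarrow> b \<le> b' \<Longrightarrow> C0_supp a b \<subseteq> C0_supp a' b'"
  by (force simp: C0_supp_iff)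

lemma closed_subspace_C0_supp: "closed_subspace (C0_supp a b)"
proof -
  have lim: "g \<in> C0_supp a b"
    if u: "\<And>n. u n \<in> C0_supp a b" and g: "g \<in> C0"
      and t: "(\<lambda>n. supnorm (fdiff (u n) g)) \<longlonglongrightarrow> 0" for u g
  proof -
    have "g x = 0" if "\<not> (a \<le> x \<and> x \<le> b)" for x
      using u that by (intro supnorm_tendsto_zero_imp_vanishing[OF _ g t]) (auto simp: C0_supp_iff)
    then show ?thesis
      using g by (auto simp: C0_supp_iff)
  qed
  have add: "fadd f g \<in> C0_supp a b" if "f \<in> C0_supp a b" "g \<in> C0_supp a b" for f g
  proof -
    have "f x \<noteq> 0 \<or> g x \<noteq> 0" if "fadd f g x \<noteq> 0" for x
      using that by (auto simp: fadd_def)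
    then show ?thesis
      using that C0_fadd unfolding C0_supp_iff by blast
  qed
  have scale: "fscale c f \<in> C0_supp a b" if "f \<in> C0_supp a b" for c f
    using that C0_fscale by (auto simp: C0_supp_iff fscale_def)
  have "fzero \<in> C0_supp a b"
    using C0_fzero unfolding C0_supp_iff fzero_def by simp
  then show ?thesis
    unfolding closed_subspace_def using C0_supp_subset_C0 lim add scale by blast
qed

lemma C0_supp_witness:
  assumes "a \<in> {-1..1}" "b \<in> {-1..1}"
  obtains f where "f \<in> C0_supp a b" "\<And>x. a < x \<Longrightarrow> x < b \<Longrightarrow> f x \<noteq> 0"
proof
  define f where "f x = complex_of_real (max 0 (min (x - a) (b - x)))" for x
  have zero: "f x = 0" if "\<not> (a < x \<and> x < b)" for x
    using that by (auto simp: f_def max_def min_def)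
  have "continuous_on {-1..1} f"
    unfolding f_def by (intro continuous_intros)
  moreover have "f (-1) = 0" "f 1 = 0" "\<And>x. x \<notin> {-1..1} \<Longrightarrow> f x = 0"
    using assms by (auto intro!: zero)
  moreover have "a \<le> x \<and> x \<le> b" if "f x \<noteq> 0" for x
    using zero[of x] that by (metis less_imp_le)
  ultimately show "f \<in> C0_supp a b"
    by (auto simp: C0_supp_iff C0_def)
  show "f x \<noteq> 0" if "a < x" "x < b" for x
    using that by (auto simp: f_def)
qed

lemma C0_supp_subset_iff:
  assumes "a \<in> {-1..1}" "b \<in> {-1..1}" "a < b"
  shows "C0_supp a b \<subseteq> C0_supp a' b' \<longleftrightarrow> a' \<le> a \<and> b \<le> b'"
proof
  assume sub: "C0_supp a b \<subseteq> C0_supp a' b'"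
  obtain f where f: "f \<in> C0_supp a b" "\<And>x. a < x \<Longrightarrow> x < b \<Longrightarrow> f x \<noteq> 0"
    using C0_supp_witness[OF assms(1,2)] by blast
  have "f \<in> C0_supp a' b'"
    using sub f(1) by blast
  then have between: "a' \<le> x \<and> x \<le> b'" if "a < x" "x < b" for x
    using f(2)[OF that] by (auto simp: C0_supp_iff)
  show "a' \<le> a \<and> b \<le> b'"
  proof (rule ccontr)
    assume "\<not> (a' \<le> a \<and> b \<le> b')"
    then consider "a < a'" | "b' < b" by linarith
    then show False
    proof cases
      case 1
      define x where "x = (a + min a' b) / 2"
      have "a < x" "x < b" "x < a'"
        using 1 \<open>a < b\<close> by (auto simp: x_def min_def)
      then show False
        using between[of x] by auto
    next
      case 2
      define x where "x = (b + max b' a) / 2"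
      have "a < x" "x < b" "b' < x"
        using 2 \<open>a < b\<close> by (auto simp: x_def max_def)
      then show False
        using between[of x] by auto
    qed
  qed
qed (rule C0_supp_mono; simp)

lemma Vop_C0_supp_subset:
  assumes "\<phi> \<in> Gamma" "a \<in> {-1..1}" "b \<in> {-1..1}"
  shows "Vop \<phi> ` C0_supp (\<phi> a) (\<phi> b) \<subseteq> C0_supp a b"
proof
  fix g assume "g \<in> Vop \<phi> ` C0_supp (\<phi> a) (\<phi> b)"
  then obtain f where f: "f \<in> C0_supp (\<phi> a) (\<phi> b)" "g = Vop \<phi> f"
    by blast
  have "a \<le> x \<and> x \<le> b" if "g x \<noteq> 0" for x
  proof -
    have "x \<in> {-1..1}" "f (\<phi> x) \<noteq> 0"
      using that f C0_supp_subset_C0 by (auto simp: Vop_def split: if_splits)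
    then show ?thesis
      using f(1) strict_mono_on_less_eq[OF GammaD(2)[OF assms(1)]] assms(2,3)
      by (auto simp: C0_supp_iff)
  qed
  then show "g \<in> C0_supp a b"
    using Vop_C0[OF assms(1)] f C0_supp_subset_C0 by (auto simp: C0_supp_iff)
qed

lemma Vop_C0_supp:
  assumes "\<phi> \<in> Gamma" "a \<in> {-1..1}" "b \<in> {-1..1}"
  shows "Vop \<phi> ` C0_supp (\<phi> a) (\<phi> b) = C0_supp a b"
proof
  let ?\<psi> = "Gamma_inv \<phi>"
  have "Vop ?\<psi> ` C0_supp a b \<subseteq> C0_supp (\<phi> a) (\<phi> b)"
    using Vop_C0_supp_subset[OF Gamma_inv_Gamma[OF assms(1)], of "\<phi> a" "\<phi> b"]
      Gamma_in[OF assms(1)] assms(2,3) Gamma_inv_left[OF assms(1)] by simp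
  then have "Vop \<phi> ` Vop ?\<psi> ` C0_supp a b \<subseteq> Vop \<phi> ` C0_supp (\<phi> a) (\<phi> b)"
    by (rule image_mono)
  then show "C0_supp a b \<subseteq> Vop \<phi> ` C0_supp (\<phi> a) (\<phi> b)"
    using inverse_op_image[OF Vop_Gamma_inv_right[OF assms(1)] C0_supp_subset_C0] by simp
qed (rule Vop_C0_supp_subset[OF assms])

section \<open>Collineations and the nest algebra\<close>

lemma ColD:
  assumes "S \<in> Col F"
  shows "S \<in> BOp" "\<exists>S'\<in>BOp. S \<circ> S' = Iop \<and> S' \<circ> S = Iop"
    "closed_subspace M \<Longrightarrow> M \<in> F \<longleftrightarrow> S ` M \<in> F"
  using assms unfolding Col_def invertible_in_def by blast+

lemma Col_inverse:
  assumes "S \<in> Col F" "S' \<in> BOp" "S \<circ> S' = Iop" "S' \<circ> S = Iop"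
  shows "S' \<in> Col F"
proof -
  have "M \<in> F \<longleftrightarrow> S' ` M \<in> F" if M: "closed_subspace M" for M
  proof -
    have "closed_subspace (S' ` M)"
      using closed_subspace_image[OF assms(2) ColD(1)[OF assms(1)] assms(4,3) M] .
    moreover have "S ` S' ` M = M"
      using inverse_op_image[OF assms(3) closed_subspaceD(1)[OF M]] .
    ultimately show ?thesis
      using ColD(3)[OF assms(1)] by metis
  qed
  then show ?thesis
    unfolding Col_def invertible_in_def using assms ColD(1) by blast
qed

lemma Col_comp:
  assumes "S \<in> Col F" "T \<in> Col F"
  shows "S \<circ> T \<in> Col F"
proof -
  obtain S' where S': "S' \<in> BOp" "S \<circ> S' = Iop" "S' \<circ> S = Iop"
    using ColD(2)[OF assms(1)] by blast
  obtain T' where T': "T' \<in> BOp" "T \<circ> T' = Iop" "T' \<circ> T = Iop"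
    using ColD(2)[OF assms(2)] by blast
  have "(S \<circ> T) \<circ> (T' \<circ> S') = S \<circ> (T \<circ> T') \<circ> S'" "(T' \<circ> S') \<circ> (S \<circ> T) = T' \<circ> (S' \<circ> S) \<circ> T"
    by (simp_all add: o_assoc)
  then have inv: "(S \<circ> T) \<circ> (T' \<circ> S') = Iop" "(T' \<circ> S') \<circ> (S \<circ> T) = Iop"
    using S'(2,3) T'(2,3) comp_Iop[OF ColD(1)[OF assms(1)]] comp_Iop[OF T'(1)] by simp_all
  have "M \<in> F \<longleftrightarrow> (S \<circ> T) ` M \<in> F" if M: "closed_subspace M" for M
    using ColD(3)[OF assms(2) M] ColD(3)[OF assms(1)]
      closed_subspace_image[OF ColD(1)[OF assms(2)] T' M] by (simp add: image_comp)
  then show ?thesis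
    unfolding Col_def invertible_in_def
    using BOp_comp[OF ColD(1)[OF assms(1)] ColD(1)[OF assms(2)]] BOp_comp[OF T'(1) S'(1)] inv
    by blast
qed

lemma Iop_Col: "Iop \<in> Col F"
proof -
  have "Iop ` M = M" if "closed_subspace M" for M
    using closed_subspaceD(1)[OF that] by (force simp: Iop_def)
  then show ?thesis
    unfolding Col_def invertible_in_def using Iop_BOp Iop_comp[OF Iop_BOp] by auto
qed

lemma group_ColG: "group (ColG F)"
proof (rule groupI)
  fix S assume "S \<in> carrier (ColG F)"
  then have "S \<in> Col F" by (simp add: ColG_def)
  then obtain S' where S': "S' \<in> BOp" "S \<circ> S' = Iop" "S' \<circ> S = Iop"
    using ColD(2) by blast
  then have "S' \<in> Col F"
    using Col_inverse \<open>S \<in> Col F\<close> by blast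
  then show "\<exists>S'\<in>carrier (ColG F). S' \<otimes>\<^bsub>ColG F\<^esub> S = \<one>\<^bsub>ColG F\<^esub>"
    using S'(3) by (auto simp: ColG_def)
qed (auto simp: ColG_def Col_comp Iop_Col o_assoc Iop_comp ColD(1))

lemma Grp_Alg_iff:
  assumes "\<And>M. M \<in> F \<Longrightarrow> M \<subseteq> C0"
  shows "A \<in> Grp (Alg F) \<longleftrightarrow>
    A \<in> BOp \<and> (\<exists>A'\<in>BOp. A \<circ> A' = Iop \<and> A' \<circ> A = Iop) \<and> (\<forall>M\<in>F. A ` M = M)"
proof
  assume "A \<in> Grp (Alg F)"
  then obtain A' where A: "A \<in> BOp" "\<forall>M\<in>F. A ` M \<subseteq> M"
    and A': "A' \<in> BOp" "\<forall>M\<in>F. A' ` M \<subseteq> M" "A \<circ> A' = Iop" "A' \<circ> A = Iop"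
    unfolding Grp_def invertible_in_def Alg_def by blast
  have "A ` M = M" if "M \<in> F" for M
  proof -
    have "M = A ` A' ` M"
      using inverse_op_image[OF A'(3) assms[OF that]] by simp
    also have "\<dots> \<subseteq> A ` M"
      using A'(2) that by blast
    finally show ?thesis using A(2) that by blast
  qed
  then show "A \<in> BOp \<and> (\<exists>A'\<in>BOp. A \<circ> A' = Iop \<and> A' \<circ> A = Iop) \<and> (\<forall>M\<in>F. A ` M = M)"
    using A A' by blast
next
  assume "A \<in> BOp \<and> (\<exists>A'\<in>BOp. A \<circ> A' = Iop \<and> A' \<circ> A = Iop) \<and> (\<forall>M\<in>F. A ` M = M)"
  then obtain A' where A: "A \<in> BOp" "\<forall>M\<in>F. A ` M = M"
    and A': "A' \<in> BOp" "A \<circ> A' = Iop" "A' \<circ> A = Iop"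
    by blast
  have "A' ` M = M" if "M \<in> F" for M
    using inverse_op_image[OF A'(3) assms[OF that]] A(2) that by simp
  then show "A \<in> Grp (Alg F)"
    unfolding Grp_def invertible_in_def Alg_def using A A' by blast
qed

lemma Grp_Alg_subset_Col:
  assumes "\<And>M. M \<in> F \<Longrightarrow> M \<subseteq> C0"
  shows "Grp (Alg F) \<subseteq> Col F"
proof
  fix A assume "A \<in> Grp (Alg F)"
  then have "A \<in> BOp \<and> (\<exists>A'\<in>BOp. A \<circ> A' = Iop \<and> A' \<circ> A = Iop) \<and> (\<forall>M\<in>F. A ` M = M)"
    using Grp_Alg_iff[OF assms, where A = A] by blast
  then obtain A' where A: "A \<in> BOp" "\<forall>M\<in>F. A ` M = M"
    and A': "A' \<in> BOp" "A \<circ> A' = Iop" "A' \<circ> A = Iop"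
    by blast
  have A'_fixes: "A' ` N = N" if "N \<in> F" for N
    using inverse_op_image[OF A'(3) assms[OF that]] A(2) that by simp
  have "M \<in> F \<longleftrightarrow> A ` M \<in> F" if M: "closed_subspace M" for M
  proof
    assume "M \<in> F"
    then show "A ` M \<in> F"
      using A(2) by simp
  next
    assume "A ` M \<in> F"
    have "M = A' ` A ` M"
      using inverse_op_image[OF A'(3) closed_subspaceD(1)[OF M]] by simp
    also have "\<dots> = A ` M"
      using A'_fixes[OF \<open>A ` M \<in> F\<close>] .
    finally show "M \<in> F"
      using \<open>A ` M \<in> F\<close> by simp
  qed
  then show "A \<in> Col F"
    unfolding Col_def invertible_in_def using A A' by blast
qed

lemma Iop_Grp_Alg:
  assumes "\<And>M. M \<in> F \<Longrightarrow> M \<subseteq> C0"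
  shows "Iop \<in> Grp (Alg F)"
proof -
  have "Iop ` M = M" if "M \<in> F" for M
    using assms[OF that] by (force simp: Iop_def)
  moreover have "\<exists>A'\<in>BOp. Iop \<circ> A' = Iop \<and> A' \<circ> Iop = Iop"
    using Iop_BOp Iop_comp[OF Iop_BOp] by (intro bexI[of _ Iop]) simp_all
  ultimately show ?thesis
    using Iop_BOp by (simp add: Grp_Alg_iff[OF assms])
qed

lemma Col_fixing_imp_Grp_Alg:
  assumes "\<And>M. M \<in> F \<Longrightarrow> M \<subseteq> C0" "S \<in> Col F" "\<And>M. M \<in> F \<Longrightarrow> S ` M = M"
  shows "S \<in> Grp (Alg F)"
  using Grp_Alg_iff[OF assms(1), where A = S] ColD(1,2)[OF assms(2)] assms(3) by blast

section \<open>The nest of a pair of parametrisations\<close>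

locale nest_parametrisation =
  fixes \<theta>1 \<theta>2 :: "real \<Rightarrow> real"
  assumes th1_bij: "bij_betw \<theta>1 {0..1} {-1..0}"
    and th1_dec: "\<forall>s\<in>{0..1}. \<forall>t\<in>{0..1}. s < t \<longrightarrow> \<theta>1 t < \<theta>1 s"
    and th2_bij: "bij_betw \<theta>2 {0..1} {0..1}"
    and th2_inc: "strict_mono_on {0..1} \<theta>2"
begin

abbreviation N :: "real \<Rightarrow> (real \<Rightarrow> complex) set" where
  "N \<equiv> Nt \<theta>1 \<theta>2"

lemma th1_in: "t \<in> {0..1} \<Longrightarrow> \<theta>1 t \<in> {-1..0}"
  using th1_bij by (rule bij_betw_apply)

lemma th2_in: "t \<in> {0..1} \<Longrightarrow> \<theta>2 t \<in> {0..1}"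
  using th2_bij by (rule bij_betw_apply)

lemma th_in_interval: "t \<in> {0..1} \<Longrightarrow> \<theta>1 t \<in> {-1..1} \<and> \<theta>2 t \<in> {-1..1}"
  using th1_in th2_in by fastforce

lemma th1_less_iff: "s \<in> {0..1} \<Longrightarrow> t \<in> {0..1} \<Longrightarrow> \<theta>1 s < \<theta>1 t \<longleftrightarrow> t < s"
  using th1_dec by (metis linorder_neqE_linordered_idom order_less_asym order_less_irrefl)

lemma th1_le_iff: "s \<in> {0..1} \<Longrightarrow> t \<in> {0..1} \<Longrightarrow> \<theta>1 s \<le> \<theta>1 t \<longleftrightarrow> t \<le> s"
  using th1_less_iff by (meson linorder_not_le)

lemma th1_surj: "x \<in> {-1..0} \<Longrightarrow> \<exists>t\<in>{0..1}. \<theta>1 t = x"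
  using bij_betw_imp_surj_on[OF th1_bij] by (metis image_iff)

lemma th2_surj: "x \<in> {0..1} \<Longrightarrow> \<exists>t\<in>{0..1}. \<theta>2 t = x"
  using bij_betw_imp_surj_on[OF th2_bij] by (metis image_iff)

lemma th_cover:
  assumes "x \<in> {-1..1}"
  obtains t where "t \<in> {0..1}" "\<theta>1 t = x \<or> \<theta>2 t = x"
proof (cases "x \<le> 0")
  case True
  then show ?thesis
    using th1_surj[of x] assms that by auto
next
  case False
  then show ?thesis
    using th2_surj[of x] assms that by auto
qed

lemma th_zero: "\<theta>1 0 = 0" "\<theta>2 0 = 0"
proof -
  obtain u where "u \<in> {0..1}" "\<theta>1 u = 0"
    using th1_surj[of 0] by auto
  then show "\<theta>1 0 = 0"
    using th1_le_iff[of u 0] th1_in[of 0] by auto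
  show "\<theta>2 0 = 0"
    using strict_mono_on_bij_betw_endpoints(1)[OF th2_bij th2_inc] by simp
qed

lemma th_sign: "t \<in> {0..1} \<Longrightarrow> 0 < t \<Longrightarrow> \<theta>1 t < 0 \<and> 0 < \<theta>2 t"
  using th1_less_iff[of t 0] strict_mono_on_less[OF th2_inc, of 0 t] th_zero by auto

lemma N_eq_C0_supp: "N t = C0_supp (\<theta>1 t) (\<theta>2 t)"
  by (simp add: Nt_def C0_supp_def)

lemma N_subset_C0: "N t \<subseteq> C0"
  unfolding N_eq_C0_supp by (rule C0_supp_subset_C0)

lemma closed_subspace_N: "closed_subspace (N t)"
  unfolding N_eq_C0_supp by (rule closed_subspace_C0_supp)

lemma N_in_Nest: "t \<in> {0..1} \<Longrightarrow> N t \<in> Nest \<theta>1 \<theta>2"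
  unfolding Nest_def by blast

lemma NestE:
  assumes "M \<in> Nest \<theta>1 \<theta>2"
  obtains t where "t \<in> {0..1}" "M = N t"
  using assms unfolding Nest_def by blast

lemma Nest_subset_C0: "M \<in> Nest \<theta>1 \<theta>2 \<Longrightarrow> M \<subseteq> C0"
  using N_subset_C0 by (auto elim: NestE)

lemma N_subset_iff:
  assumes "s \<in> {0..1}" "t \<in> {0..1}"
  shows "N s \<subseteq> N t \<longleftrightarrow> s \<le> t"
proof
  assume "s \<le> t"
  then show "N s \<subseteq> N t"
    unfolding N_eq_C0_supp using assms th1_le_iff strict_mono_on_less_eq[OF th2_inc]
    by (intro C0_supp_mono) auto
next
  assume sub: "N s \<subseteq> N t"
  show "s \<le> t"
  proof (rule ccontr)
    assume "\<not> s \<le> t"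
    then have "t < s" "0 < s"
      using assms by auto
    then have "\<theta>1 s < \<theta>2 s"
      using th_sign[OF assms(1)] by force
    then have "\<theta>1 t \<le> \<theta>1 s"
      using sub C0_supp_subset_iff[of "\<theta>1 s" "\<theta>2 s" "\<theta>1 t" "\<theta>2 t"] th_in_interval[OF assms(1)]
      unfolding N_eq_C0_supp by simp
    then show False
      using th1_le_iff[OF assms(2,1)] \<open>t < s\<close> by simp
  qed
qed

lemma N_inj: "s \<in> {0..1} \<Longrightarrow> t \<in> {0..1} \<Longrightarrow> N s = N t \<Longrightarrow> s = t"
  using N_subset_iff by (metis order_antisym order_refl)

lemma Vop_image_N:
  assumes "\<phi> \<in> Gamma" "s \<in> {0..1}" "\<phi> (\<theta>1 s) = \<theta>1 u" "\<phi> (\<theta>2 s) = \<theta>2 u"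
  shows "Vop \<phi> ` N u = N s"
  using Vop_C0_supp[OF assms(1), of "\<theta>1 s" "\<theta>2 s"] th_in_interval[OF assms(2)] assms(3,4)
  unfolding N_eq_C0_supp by simp

lemma Gamma_th_iff:
  "\<phi> \<in> Gamma_th \<theta>1 \<theta>2 \<longleftrightarrow>
    \<phi> \<in> Gamma \<and> (\<forall>t\<in>{0..1}. \<exists>s\<in>{0..1}. \<phi> (\<theta>1 t) = \<theta>1 s \<and> \<phi> (\<theta>2 t) = \<theta>2 s)"
proof -
  have "(\<phi> (\<theta>1 t) \<in> {-1..0} \<and> \<phi> (\<theta>2 t) \<in> {0..1}
      \<and> inv_into {0..1} \<theta>1 (\<phi> (\<theta>1 t)) = inv_into {0..1} \<theta>2 (\<phi> (\<theta>2 t)))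
    \<longleftrightarrow> (\<exists>s\<in>{0..1}. \<phi> (\<theta>1 t) = \<theta>1 s \<and> \<phi> (\<theta>2 t) = \<theta>2 s)" for t
  proof
    assume h: "\<phi> (\<theta>1 t) \<in> {-1..0} \<and> \<phi> (\<theta>2 t) \<in> {0..1}
      \<and> inv_into {0..1} \<theta>1 (\<phi> (\<theta>1 t)) = inv_into {0..1} \<theta>2 (\<phi> (\<theta>2 t))"
    define s where "s = inv_into {0..1} \<theta>1 (\<phi> (\<theta>1 t))"
    have "s \<in> {0..1}"
      unfolding s_def using bij_betw_apply[OF bij_betw_inv_into[OF th1_bij]] h by blast
    moreover have "\<theta>1 s = \<phi> (\<theta>1 t)" "\<theta>2 s = \<phi> (\<theta>2 t)"
      unfolding s_def using h bij_betw_inv_into_right[OF th1_bij] bij_betw_inv_into_right[OF th2_bij]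
      by metis+
    ultimately show "\<exists>s\<in>{0..1}. \<phi> (\<theta>1 t) = \<theta>1 s \<and> \<phi> (\<theta>2 t) = \<theta>2 s"
      by metis
  next
    assume "\<exists>s\<in>{0..1}. \<phi> (\<theta>1 t) = \<theta>1 s \<and> \<phi> (\<theta>2 t) = \<theta>2 s"
    then show "\<phi> (\<theta>1 t) \<in> {-1..0} \<and> \<phi> (\<theta>2 t) \<in> {0..1}
      \<and> inv_into {0..1} \<theta>1 (\<phi> (\<theta>1 t)) = inv_into {0..1} \<theta>2 (\<phi> (\<theta>2 t))"
      using th1_in th2_in bij_betw_inv_into_left[OF th1_bij] bij_betw_inv_into_left[OF th2_bij]
      by auto
  qed
  then show ?thesis
    unfolding Gamma_th_def by blast
qed

lemma Gamma_thI:
  assumes "\<phi> \<in> Gamma" "\<And>t. t \<in> {0..1} \<Longrightarrow> \<exists>s\<in>{0..1}. \<phi> (\<theta>1 t) = \<theta>1 s \<and> \<phi> (\<theta>2 t) = \<theta>2 s"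
  shows "\<phi> \<in> Gamma_th \<theta>1 \<theta>2"
  using assms Gamma_th_iff by blast

lemma Gamma_thE:
  assumes "\<phi> \<in> Gamma_th \<theta>1 \<theta>2" "t \<in> {0..1}"
  obtains s where "s \<in> {0..1}" "\<phi> (\<theta>1 t) = \<theta>1 s" "\<phi> (\<theta>2 t) = \<theta>2 s"
  using assms Gamma_th_iff by blast

lemma Gamma_th_Gamma: "\<phi> \<in> Gamma_th \<theta>1 \<theta>2 \<Longrightarrow> \<phi> \<in> Gamma"
  unfolding Gamma_th_def by blast

lemma Gamma_th_fixes_zero:
  assumes "\<phi> \<in> Gamma_th \<theta>1 \<theta>2"
  shows "\<phi> 0 = 0"
proof -
  obtain s where s: "s \<in> {0..1}" "\<phi> (\<theta>1 0) = \<theta>1 s" "\<phi> (\<theta>2 0) = \<theta>2 s"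
    using Gamma_thE[OF assms, of 0] by auto
  then have "s = 0"
    using th_sign[OF s(1)] th_zero by force
  then show ?thesis
    using s th_zero by simp
qed

lemma Gamma_th_surj:
  assumes "\<phi> \<in> Gamma_th \<theta>1 \<theta>2" "t \<in> {0..1}"
  obtains u where "u \<in> {0..1}" "\<phi> (\<theta>1 u) = \<theta>1 t" "\<phi> (\<theta>2 u) = \<theta>2 t"
proof -
  note \<phi> = Gamma_th_Gamma[OF assms(1)]
  have "\<theta>1 t \<in> \<phi> ` {-1..1}"
    using Gamma_image[OF \<phi>] th_in_interval[OF assms(2)] by simp
  then obtain y where y: "y \<in> {-1..1}" "\<phi> y = \<theta>1 t"
    by (metis imageE)
  have "\<not> 0 < y"
    using strict_mono_onD[OF GammaD(2)[OF \<phi>], of 0 y] y Gamma_th_fixes_zero[OF assms(1)]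
      th1_in[OF assms(2)] by auto
  then obtain u where u: "u \<in> {0..1}" "\<theta>1 u = y"
    using th1_surj[of y] y(1) by auto
  obtain s where s: "s \<in> {0..1}" "\<phi> (\<theta>1 u) = \<theta>1 s" "\<phi> (\<theta>2 u) = \<theta>2 s"
    using Gamma_thE[OF assms(1) u(1)] .
  have "\<theta>1 s = \<theta>1 t"
    using s(2) u(2) y(2) by simp
  then have "s = t"
    using inj_onD[OF bij_betw_imp_inj_on[OF th1_bij]] s(1) assms(2) by blast
  then show ?thesis
    using that u(1) s by blast
qed

lemma Gamma_th_comp:
  assumes "\<phi> \<in> Gamma_th \<theta>1 \<theta>2" "\<psi> \<in> Gamma_th \<theta>1 \<theta>2"
  shows "\<phi> \<circ> \<psi> \<in> Gamma_th \<theta>1 \<theta>2"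
proof (rule Gamma_thI)
  show "\<phi> \<circ> \<psi> \<in> Gamma"
    using Gamma_comp[OF Gamma_th_Gamma[OF assms(1)] Gamma_th_Gamma[OF assms(2)]] .
  fix t :: real assume "t \<in> {0..1}"
  then obtain u where u: "u \<in> {0..1}" "\<psi> (\<theta>1 t) = \<theta>1 u" "\<psi> (\<theta>2 t) = \<theta>2 u"
    using Gamma_thE[OF assms(2)] by blast
  then obtain s where "s \<in> {0..1}" "\<phi> (\<theta>1 u) = \<theta>1 s" "\<phi> (\<theta>2 u) = \<theta>2 s"
    using Gamma_thE[OF assms(1)] by blast
  then show "\<exists>s\<in>{0..1}. (\<phi> \<circ> \<psi>) (\<theta>1 t) = \<theta>1 s \<and> (\<phi> \<circ> \<psi>) (\<theta>2 t) = \<theta>2 s"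
    using u by auto
qed

lemma Gamma_th_Gamma_inv:
  assumes "\<phi> \<in> Gamma_th \<theta>1 \<theta>2"
  shows "Gamma_inv \<phi> \<in> Gamma_th \<theta>1 \<theta>2"
proof (rule Gamma_thI)
  note \<phi> = Gamma_th_Gamma[OF assms]
  show "Gamma_inv \<phi> \<in> Gamma"
    using Gamma_inv_Gamma[OF \<phi>] .
  fix t :: real assume "t \<in> {0..1}"
  then obtain u where "u \<in> {0..1}" "\<phi> (\<theta>1 u) = \<theta>1 t" "\<phi> (\<theta>2 u) = \<theta>2 t"
    using Gamma_th_surj[OF assms] by blast
  then show "\<exists>s\<in>{0..1}. Gamma_inv \<phi> (\<theta>1 t) = \<theta>1 s \<and> Gamma_inv \<phi> (\<theta>2 t) = \<theta>2 s"
    using Gamma_inv_left[OF \<phi>] by metis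
qed

lemma id_Gamma_th: "id \<in> Gamma_th \<theta>1 \<theta>2"
  by (rule Gamma_thI[OF id_Gamma]) auto

lemma subgroup_Gamma_th: "subgroup (Gamma_th \<theta>1 \<theta>2) GammaG"
proof (rule group.subgroupI[OF group_GammaG])
  show "Gamma_th \<theta>1 \<theta>2 \<subseteq> carrier GammaG"
    using Gamma_th_Gamma by (auto simp: GammaG_def)
  show "Gamma_th \<theta>1 \<theta>2 \<noteq> {}"
    using id_Gamma_th by blast
  show "inv\<^bsub>GammaG\<^esub> \<phi> \<in> Gamma_th \<theta>1 \<theta>2" if "\<phi> \<in> Gamma_th \<theta>1 \<theta>2" for \<phi>
    using inv_GammaG[OF Gamma_th_Gamma[OF that]] Gamma_th_Gamma_inv[OF that] by simp
  show "\<phi> \<otimes>\<^bsub>GammaG\<^esub> \<psi> \<in> Gamma_th \<theta>1 \<theta>2"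
    if "\<phi> \<in> Gamma_th \<theta>1 \<theta>2" "\<psi> \<in> Gamma_th \<theta>1 \<theta>2" for \<phi> \<psi>
    using Gamma_th_comp[OF that] by (simp add: GammaG_def)
qed

lemma Vop_image_N_in_Nest:
  assumes "\<phi> \<in> Gamma_th \<theta>1 \<theta>2" "t \<in> {0..1}"
  shows "Vop \<phi> ` N t \<in> Nest \<theta>1 \<theta>2"
proof -
  obtain u where u: "u \<in> {0..1}" "\<phi> (\<theta>1 u) = \<theta>1 t" "\<phi> (\<theta>2 u) = \<theta>2 t"
    using Gamma_th_surj[OF assms] .
  then have "Vop \<phi> ` N t = N u"
    using Vop_image_N[OF Gamma_th_Gamma[OF assms(1)]] by blast
  then show ?thesis
    using N_in_Nest[OF u(1)] by simp
qed

lemma Gamma_th_imp_Vop_Col: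
  assumes "\<phi> \<in> Gamma_th \<theta>1 \<theta>2"
  shows "Vop \<phi> \<in> Col (Nest \<theta>1 \<theta>2)"
proof -
  note \<phi> = Gamma_th_Gamma[OF assms]
  have "M \<in> Nest \<theta>1 \<theta>2 \<longleftrightarrow> Vop \<phi> ` M \<in> Nest \<theta>1 \<theta>2" if M: "closed_subspace M" for M
  proof
    assume "M \<in> Nest \<theta>1 \<theta>2"
    then show "Vop \<phi> ` M \<in> Nest \<theta>1 \<theta>2"
      using Vop_image_N_in_Nest[OF assms] by (auto elim: NestE)
  next
    assume "Vop \<phi> ` M \<in> Nest \<theta>1 \<theta>2"
    then obtain t where "t \<in> {0..1}" "Vop \<phi> ` M = N t"
      by (rule NestE)
    moreover have "M = Vop (Gamma_inv \<phi>) ` Vop \<phi> ` M"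
      using inverse_op_image[OF Vop_Gamma_inv_left[OF \<phi>] closed_subspaceD(1)[OF M]] by simp
    ultimately show "M \<in> Nest \<theta>1 \<theta>2"
      using Vop_image_N_in_Nest[OF Gamma_th_Gamma_inv[OF assms]] by simp
  qed
  then show ?thesis
    unfolding Col_def invertible_in_def
    using Vop_BOp[OF \<phi>] Vop_BOp[OF Gamma_inv_Gamma[OF \<phi>]] Vop_Gamma_inv_left[OF \<phi>]
      Vop_Gamma_inv_right[OF \<phi>] by blast
qed

text \<open>\<open>Vop \<phi>\<close> maps \<open>C0_supp (\<phi> (\<theta>1 t)) (\<phi> (\<theta>2 t))\<close> onto \<open>N t\<close>, so this closed
  subspace belongs to the nest as well.\<close>

lemma Vop_Col_endpoints:
  assumes \<phi>: "\<phi> \<in> Gamma" and col: "Vop \<phi> \<in> Col (Nest \<theta>1 \<theta>2)"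
    and t: "t \<in> {0..1}" "0 < t"
  obtains s where "s \<in> {0..1}" "0 < s" "\<phi> (\<theta>1 t) = \<theta>1 s" "\<phi> (\<theta>2 t) = \<theta>2 s"
proof -
  define a b where "a = \<phi> (\<theta>1 t)" and "b = \<phi> (\<theta>2 t)"
  have ab: "a \<in> {-1..1}" "b \<in> {-1..1}" "a < b"
    unfolding a_def b_def using Gamma_in[OF \<phi>] th_in_interval[OF t(1)] th_sign[OF t]
      strict_mono_on_less[OF GammaD(2)[OF \<phi>]] by auto
  have "Vop \<phi> ` C0_supp a b = N t"
    unfolding a_def b_def N_eq_C0_supp using Vop_C0_supp[OF \<phi>] th_in_interval[OF t(1)] by blast
  then have "C0_supp a b \<in> Nest \<theta>1 \<theta>2"
    using ColD(3)[OF col closed_subspace_C0_supp, of a b] N_in_Nest[OF t(1)] by simp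
  then obtain s where s: "s \<in> {0..1}" "C0_supp a b = C0_supp (\<theta>1 s) (\<theta>2 s)"
    unfolding N_eq_C0_supp[symmetric] by (rule NestE)
  then have outer: "\<theta>1 s \<le> a" "b \<le> \<theta>2 s"
    using C0_supp_subset_iff[OF ab, of "\<theta>1 s" "\<theta>2 s"] by auto
  then have "0 < s"
    using s(1) ab(3) th_zero by (cases "s = 0") auto
  then have "a \<le> \<theta>1 s" "\<theta>2 s \<le> b"
    using C0_supp_subset_iff[of "\<theta>1 s" "\<theta>2 s" a b] th_in_interval[OF s(1)] th_sign[OF s(1)] s(2)
    by auto
  then show ?thesis
    using that s(1) outer \<open>0 < s\<close> unfolding a_def b_def by force
qed

lemma Vop_Col_fixes_zero:
  assumes \<phi>: "\<phi> \<in> Gamma" and "Vop \<phi> \<in> Col (Nest \<theta>1 \<theta>2)"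
  shows "\<phi> 0 = 0"
proof -
  have "0 \<in> \<phi> ` {-1..1}"
    using Gamma_image[OF \<phi>] by simp
  then obtain y where y: "y \<in> {-1..1}" "\<phi> y = 0"
    by (metis imageE)
  have "y = 0"
  proof (rule ccontr)
    assume "y \<noteq> 0"
    obtain t where t: "t \<in> {0..1}" "\<theta>1 t = y \<or> \<theta>2 t = y"
      using th_cover[OF y(1)] .
    then have "0 < t"
      using \<open>y \<noteq> 0\<close> th_zero by (cases "t = 0") auto
    then obtain s where "s \<in> {0..1}" "0 < s" "\<phi> (\<theta>1 t) = \<theta>1 s" "\<phi> (\<theta>2 t) = \<theta>2 s"
      using Vop_Col_endpoints[OF assms t(1)] by blast
    then show False
      using th_sign[of s] y(2) t(2) by auto
  qed
  then show ?thesis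
    using y(2) by simp
qed

lemma Vop_Col_imp_Gamma_th:
  assumes \<phi>: "\<phi> \<in> Gamma" and "Vop \<phi> \<in> Col (Nest \<theta>1 \<theta>2)"
  shows "\<phi> \<in> Gamma_th \<theta>1 \<theta>2"
proof (rule Gamma_thI[OF \<phi>])
  fix t :: real assume t: "t \<in> {0..1}"
  show "\<exists>s\<in>{0..1}. \<phi> (\<theta>1 t) = \<theta>1 s \<and> \<phi> (\<theta>2 t) = \<theta>2 s"
  proof (cases "t = 0")
    case True
    then show ?thesis
      using Vop_Col_fixes_zero[OF assms] th_zero by force
  next
    case False
    then have "0 < t"
      using t by auto
    then obtain s where "s \<in> {0..1}" "\<phi> (\<theta>1 t) = \<theta>1 s" "\<phi> (\<theta>2 t) = \<theta>2 s"
      using Vop_Col_endpoints[OF assms t] by blast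
    then show ?thesis
      by blast
  qed
qed

lemma Vop_Col_iff: "\<phi> \<in> Gamma \<Longrightarrow> Vop \<phi> \<in> Col (Nest \<theta>1 \<theta>2) \<longleftrightarrow> \<phi> \<in> Gamma_th \<theta>1 \<theta>2"
  using Gamma_th_imp_Vop_Col Vop_Col_imp_Gamma_th by blast

lemma subgroup_Vop_Gamma_th: "subgroup (Vop ` Gamma_th \<theta>1 \<theta>2) (ColG (Nest \<theta>1 \<theta>2))"
proof (rule group.subgroupI[OF group_ColG])
  show "Vop ` Gamma_th \<theta>1 \<theta>2 \<subseteq> carrier (ColG (Nest \<theta>1 \<theta>2))"
    using Gamma_th_imp_Vop_Col by (auto simp: ColG_def)
  show "Vop ` Gamma_th \<theta>1 \<theta>2 \<noteq> {}"
    using id_Gamma_th by blast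
  fix S assume "S \<in> Vop ` Gamma_th \<theta>1 \<theta>2"
  then obtain \<phi> where \<phi>: "\<phi> \<in> Gamma_th \<theta>1 \<theta>2" "S = Vop \<phi>"
    by blast
  note \<phi>_Gamma = Gamma_th_Gamma[OF \<phi>(1)]
  have "inv\<^bsub>ColG (Nest \<theta>1 \<theta>2)\<^esub> S = Vop (Gamma_inv \<phi>)"
    using group.inv_equality[OF group_ColG[of "Nest \<theta>1 \<theta>2"]] Vop_Gamma_inv_left[OF \<phi>_Gamma] \<phi>(2)
      Gamma_th_imp_Vop_Col[OF \<phi>(1)] Gamma_th_imp_Vop_Col[OF Gamma_th_Gamma_inv[OF \<phi>(1)]]
    by (simp add: ColG_def)
  then show "inv\<^bsub>ColG (Nest \<theta>1 \<theta>2)\<^esub> S \<in> Vop ` Gamma_th \<theta>1 \<theta>2"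
    using Gamma_th_Gamma_inv[OF \<phi>(1)] by simp
  fix T assume "T \<in> Vop ` Gamma_th \<theta>1 \<theta>2"
  then obtain \<psi> where \<psi>: "\<psi> \<in> Gamma_th \<theta>1 \<theta>2" "T = Vop \<psi>"
    by blast
  have "S \<otimes>\<^bsub>ColG (Nest \<theta>1 \<theta>2)\<^esub> T = Vop (\<psi> \<circ> \<phi>)"
    using Vop_comp[OF \<phi>_Gamma Gamma_th_Gamma[OF \<psi>(1)]] \<phi>(2) \<psi>(2) by (simp add: ColG_def)
  then show "S \<otimes>\<^bsub>ColG (Nest \<theta>1 \<theta>2)\<^esub> T \<in> Vop ` Gamma_th \<theta>1 \<theta>2"
    using Gamma_th_comp[OF \<psi>(1) \<phi>(1)] by simp
qed

lemma Vop_fixing_Nest_imp_id: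
  assumes \<phi>: "\<phi> \<in> Gamma_th \<theta>1 \<theta>2" and fixes_N: "\<And>t. t \<in> {0..1} \<Longrightarrow> Vop \<phi> ` N t = N t"
  shows "\<phi> = id"
proof -
  note \<phi>_Gamma = Gamma_th_Gamma[OF \<phi>]
  have fixes_th: "\<phi> (\<theta>1 t) = \<theta>1 t \<and> \<phi> (\<theta>2 t) = \<theta>2 t" if t: "t \<in> {0..1}" for t
  proof -
    obtain s where s: "s \<in> {0..1}" "\<phi> (\<theta>1 t) = \<theta>1 s" "\<phi> (\<theta>2 t) = \<theta>2 s"
      using Gamma_thE[OF \<phi> t] .
    then have "N s = N t"
      using Vop_image_N[OF \<phi>_Gamma t s(2,3)] fixes_N[OF s(1)] by simp
    then show ?thesis
      using N_inj[OF s(1) t] s by simp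
  qed
  have "\<phi> x = x" if x: "x \<in> {-1..1}" for x
  proof -
    obtain t where "t \<in> {0..1}" "\<theta>1 t = x \<or> \<theta>2 t = x"
      using th_cover[OF x] .
    then show ?thesis
      using fixes_th by auto
  qed
  then show ?thesis
    using GammaD(3)[OF \<phi>_Gamma] by (metis eq_id_iff)
qed

lemma Grp_Alg_Int_Vop_Gamma_th: "Grp (Alg (Nest \<theta>1 \<theta>2)) \<inter> Vop ` Gamma_th \<theta>1 \<theta>2 = {Iop}"
proof
  have "Iop \<in> Vop ` Gamma_th \<theta>1 \<theta>2"
    using id_Gamma_th Vop_id by (metis image_eqI)
  then show "{Iop} \<subseteq> Grp (Alg (Nest \<theta>1 \<theta>2)) \<inter> Vop ` Gamma_th \<theta>1 \<theta>2"
    using Iop_Grp_Alg[OF Nest_subset_C0] by blast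
next
  show "Grp (Alg (Nest \<theta>1 \<theta>2)) \<inter> Vop ` Gamma_th \<theta>1 \<theta>2 \<subseteq> {Iop}"
  proof
    fix S assume S: "S \<in> Grp (Alg (Nest \<theta>1 \<theta>2)) \<inter> Vop ` Gamma_th \<theta>1 \<theta>2"
    then obtain \<phi> where \<phi>: "\<phi> \<in> Gamma_th \<theta>1 \<theta>2" "S = Vop \<phi>"
      by blast
    have "Vop \<phi> ` N t = N t" if "t \<in> {0..1}" for t
      using S \<phi>(2) N_in_Nest[OF that] by (simp add: Grp_Alg_iff[OF Nest_subset_C0])
    then have "\<phi> = id"
      by (rule Vop_fixing_Nest_imp_id[OF \<phi>(1)])
    then show "S \<in> {Iop}"
      using \<phi>(2) Vop_id by simp
  qed
qed

lemma Col_image_N: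
  assumes "S \<in> Col (Nest \<theta>1 \<theta>2)" "t \<in> {0..1}"
  shows "\<exists>s\<in>{0..1}. S ` N t = N s"
  using ColD(3)[OF assms(1) closed_subspace_N] N_in_Nest[OF assms(2)] unfolding Nest_def by blast

lemma Col_order_iso:
  assumes S: "S \<in> Col (Nest \<theta>1 \<theta>2)"
  obtains \<sigma> where "bij_betw \<sigma> {0..1} {0..1}" "strict_mono_on {0..1} \<sigma>"
    "\<And>t. t \<in> {0..1} \<Longrightarrow> S ` N t = N (\<sigma> t)"
proof -
  obtain \<sigma> where \<sigma>: "\<And>t. t \<in> {0..1} \<Longrightarrow> \<sigma> t \<in> {0..1} \<and> S ` N t = N (\<sigma> t)"
    using Col_image_N[OF S] by metis
  obtain S' where S': "S' \<in> BOp" "S \<circ> S' = Iop" "S' \<circ> S = Iop"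
    using ColD(2)[OF S] by blast
  have "mono_on {0..1} \<sigma>"
  proof (rule mono_onI)
    fix t t' :: real assume t: "t \<in> {0..1}" "t' \<in> {0..1}" "t \<le> t'"
    then have "S ` N t \<subseteq> S ` N t'"
      using N_subset_iff by (simp add: image_mono)
    then show "\<sigma> t \<le> \<sigma> t'"
      using \<sigma>[OF t(1)] \<sigma>[OF t(2)] N_subset_iff by simp
  qed
  moreover have "inj_on \<sigma> {0..1}"
  proof (rule inj_onI)
    fix t t' :: real assume t: "t \<in> {0..1}" "t' \<in> {0..1}" "\<sigma> t = \<sigma> t'"
    then have "S' ` S ` N t = S' ` S ` N t'"
      using \<sigma> by metis
    then show "t = t'"
      using inverse_op_image[OF S'(3) N_subset_C0] N_inj t(1,2) by metis
  qed
  moreover have "{0..1} \<subseteq> \<sigma> ` {0..1}"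
  proof
    fix s :: real assume s: "s \<in> {0..1}"
    obtain t where t: "t \<in> {0..1}" "S' ` N s = N t"
      using Col_image_N[OF Col_inverse[OF S S'] s] by blast
    then have "N (\<sigma> t) = N s"
      using \<sigma> inverse_op_image[OF S'(2) N_subset_C0] by metis
    then show "s \<in> \<sigma> ` {0..1}"
      using N_inj \<sigma> s t(1) by (metis image_eqI)
  qed
  then have "\<sigma> ` {0..1} = {0..1}"
    using \<sigma> by auto
  ultimately have "strict_mono_on {0..1} \<sigma>" "bij_betw \<sigma> {0..1} {0..1}"
    by (simp_all add: mono_imp_strict_mono bij_betw_imageI)
  then show ?thesis
    using that \<sigma> by blast
qed

lemma th1_conjugate:
  assumes \<sigma>: "bij_betw \<sigma> {0..1} {0..1}" "strict_mono_on {0..1} \<sigma>"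
  shows "bij_betw (\<theta>1 \<circ> \<sigma> \<circ> inv_into {0..1} \<theta>1) {-1..0} {-1..0}"
    and "strict_mono_on {-1..0} (\<theta>1 \<circ> \<sigma> \<circ> inv_into {0..1} \<theta>1)"
proof -
  show "bij_betw (\<theta>1 \<circ> \<sigma> \<circ> inv_into {0..1} \<theta>1) {-1..0} {-1..0}"
    using bij_betw_inv_into[OF th1_bij] bij_betw_trans[OF \<sigma>(1) th1_bij] by (rule bij_betw_trans)
  show "strict_mono_on {-1..0} (\<theta>1 \<circ> \<sigma> \<circ> inv_into {0..1} \<theta>1)"
  proof (rule strict_mono_onI)
    fix x y :: real assume "x \<in> {-1..0}" "y \<in> {-1..0}" "x < y"
    then obtain a b where ab: "a \<in> {0..1}" "b \<in> {0..1}" "x = \<theta>1 a" "y = \<theta>1 b"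
      using th1_surj by metis
    then have "b < a"
      using \<open>x < y\<close> th1_less_iff[of a b] by simp
    then have "\<sigma> b < \<sigma> a"
      using strict_mono_onD[OF \<sigma>(2)] ab(1,2) by blast
    moreover have "\<sigma> a \<in> {0..1}" "\<sigma> b \<in> {0..1}"
      using bij_betw_apply[OF \<sigma>(1)] ab(1,2) by auto
    ultimately show "(\<theta>1 \<circ> \<sigma> \<circ> inv_into {0..1} \<theta>1) x < (\<theta>1 \<circ> \<sigma> \<circ> inv_into {0..1} \<theta>1) y"
      using ab th1_less_iff bij_betw_inv_into_left[OF th1_bij] by simp
  qed
qed

lemma th2_conjugate:
  assumes \<sigma>: "bij_betw \<sigma> {0..1} {0..1}" "strict_mono_on {0..1} \<sigma>"
  shows "bij_betw (\<theta>2 \<circ> \<sigma> \<circ> inv_into {0..1} \<theta>2) {0..1} {0..1}"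
    and "strict_mono_on {0..1} (\<theta>2 \<circ> \<sigma> \<circ> inv_into {0..1} \<theta>2)"
proof -
  show "bij_betw (\<theta>2 \<circ> \<sigma> \<circ> inv_into {0..1} \<theta>2) {0..1} {0..1}"
    using bij_betw_inv_into[OF th2_bij] bij_betw_trans[OF \<sigma>(1) th2_bij] by (rule bij_betw_trans)
  have "\<sigma> ` {0..1} \<subseteq> {0..1}" "inv_into {0..1} \<theta>2 ` {0..1} \<subseteq> {0..1}"
    using bij_betw_imp_surj_on[OF \<sigma>(1)] bij_betw_imp_surj_on[OF bij_betw_inv_into[OF th2_bij]]
    by simp_all
  then show "strict_mono_on {0..1} (\<theta>2 \<circ> \<sigma> \<circ> inv_into {0..1} \<theta>2)"
    using monotone_on_o[OF monotone_on_o[OF th2_inc \<sigma>(2)] strict_mono_on_inv_into[OF th2_bij th2_inc]]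
    by blast
qed

lemma Gamma_th_lift:
  assumes \<sigma>: "bij_betw \<sigma> {0..1} {0..1}" "strict_mono_on {0..1} \<sigma>"
  obtains \<kappa> where "\<kappa> \<in> Gamma_th \<theta>1 \<theta>2"
    "\<And>t. t \<in> {0..1} \<Longrightarrow> \<kappa> (\<theta>1 t) = \<theta>1 (\<sigma> t) \<and> \<kappa> (\<theta>2 t) = \<theta>2 (\<sigma> t)"
proof -
  define f where "f = \<theta>1 \<circ> \<sigma> \<circ> inv_into {0..1} \<theta>1"
  define g where "g = \<theta>2 \<circ> \<sigma> \<circ> inv_into {0..1} \<theta>2"
  note fg = th1_conjugate[OF \<sigma>, folded f_def] th2_conjugate[OF \<sigma>, folded g_def]
  have \<kappa>: "Gamma_glue f g (\<theta>1 t) = \<theta>1 (\<sigma> t) \<and> Gamma_glue f g (\<theta>2 t) = \<theta>2 (\<sigma> t)"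
    if t: "t \<in> {0..1}" for t
    using Gamma_glue_left[OF fg th1_in[OF t]] Gamma_glue_right[OF fg th2_in[OF t]]
      bij_betw_inv_into_left[OF th1_bij t] bij_betw_inv_into_left[OF th2_bij t]
    by (simp add: f_def g_def)
  have "Gamma_glue f g \<in> Gamma_th \<theta>1 \<theta>2"
  proof (rule Gamma_thI[OF Gamma_glue_Gamma[OF fg]])
    fix t :: real assume "t \<in> {0..1}"
    then show "\<exists>s\<in>{0..1}. Gamma_glue f g (\<theta>1 t) = \<theta>1 s \<and> Gamma_glue f g (\<theta>2 t) = \<theta>2 s"
      using \<kappa> bij_betw_apply[OF \<sigma>(1)] by blast
  qed
  then show ?thesis
    using that \<kappa> by blast
qed

lemma Col_factorisation:
  assumes S: "S \<in> Col (Nest \<theta>1 \<theta>2)"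
  obtains A T where "S = A \<circ> T" "A \<in> Grp (Alg (Nest \<theta>1 \<theta>2))" "T \<in> Vop ` Gamma_th \<theta>1 \<theta>2"
proof -
  obtain \<sigma> where \<sigma>: "bij_betw \<sigma> {0..1} {0..1}" "strict_mono_on {0..1} \<sigma>"
    "\<And>t. t \<in> {0..1} \<Longrightarrow> S ` N t = N (\<sigma> t)"
    using Col_order_iso[OF S] by blast
  obtain \<kappa> where \<kappa>: "\<kappa> \<in> Gamma_th \<theta>1 \<theta>2"
    "\<And>t. t \<in> {0..1} \<Longrightarrow> \<kappa> (\<theta>1 t) = \<theta>1 (\<sigma> t) \<and> \<kappa> (\<theta>2 t) = \<theta>2 (\<sigma> t)"
    using Gamma_th_lift[OF \<sigma>(1,2)] by blast
  note \<kappa>_Gamma = Gamma_th_Gamma[OF \<kappa>(1)]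
  define A where "A = S \<circ> Vop \<kappa>"
  have A_Col: "A \<in> Col (Nest \<theta>1 \<theta>2)"
    unfolding A_def using Col_comp[OF S Gamma_th_imp_Vop_Col[OF \<kappa>(1)]] .
  have A_fixes: "A ` M = M" if M: "M \<in> Nest \<theta>1 \<theta>2" for M
  proof -
    obtain t where t: "t \<in> {0..1}" "M = N t"
      using M by (rule NestE)
    obtain u where u: "u \<in> {0..1}" "\<sigma> u = t"
      using bij_betw_imp_surj_on[OF \<sigma>(1)] t(1) by (metis imageE)
    have "A ` M = S ` Vop \<kappa> ` N (\<sigma> u)"
      unfolding A_def t(2) u(2) by (rule image_comp[symmetric])
    also have "\<dots> = N (\<sigma> u)"
      using Vop_image_N[OF \<kappa>_Gamma u(1)] \<kappa>(2)[OF u(1)] \<sigma>(3)[OF u(1)] by simp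
    finally show ?thesis
      using t(2) u(2) by simp
  qed
  have "A \<in> Grp (Alg (Nest \<theta>1 \<theta>2))"
    using Col_fixing_imp_Grp_Alg[OF Nest_subset_C0 A_Col A_fixes] .
  moreover have "S = A \<circ> Vop (Gamma_inv \<kappa>)"
    using Vop_Gamma_inv_right[OF \<kappa>_Gamma] comp_Iop[OF ColD(1)[OF S]] by (simp add: A_def comp_assoc)
  ultimately show ?thesis
    using that Gamma_th_Gamma_inv[OF \<kappa>(1)] by blast
qed

lemma Col_eq_Grp_Alg_comp_Vop:
  "Col (Nest \<theta>1 \<theta>2) =
    {A \<circ> T | A T. A \<in> Grp (Alg (Nest \<theta>1 \<theta>2)) \<and> T \<in> Vop ` Gamma_th \<theta>1 \<theta>2}"
proof
  show "Col (Nest \<theta>1 \<theta>2) \<subseteq>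
      {A \<circ> T | A T. A \<in> Grp (Alg (Nest \<theta>1 \<theta>2)) \<and> T \<in> Vop ` Gamma_th \<theta>1 \<theta>2}"
    using Col_factorisation by blast
  show "{A \<circ> T | A T. A \<in> Grp (Alg (Nest \<theta>1 \<theta>2)) \<and> T \<in> Vop ` Gamma_th \<theta>1 \<theta>2} \<subseteq>
      Col (Nest \<theta>1 \<theta>2)"
    using Col_comp Grp_Alg_subset_Col[OF Nest_subset_C0] Gamma_th_imp_Vop_Col by blast
qed

end

theorem theorem5p6:
  fixes \<theta>1 \<theta>2 :: "real \<Rightarrow> real"
  assumes th1_bij: "bij_betw \<theta>1 {0..1} {-1..0}"
      and th1_dec: "\<forall>s\<in>{0..1}. \<forall>t\<in>{0..1}. s < t \<longrightarrow> \<theta>1 t < \<theta>1 s"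
      and th2_bij: "bij_betw \<theta>2 {0..1} {0..1}"
      and th2_inc: "strict_mono_on {0..1} \<theta>2"
  shows "(group GammaG \<and> subgroup (Gamma_th \<theta>1 \<theta>2) GammaG)
    \<and> (\<forall>\<phi>\<in>Gamma. Vop \<phi> \<in> Col (Nest \<theta>1 \<theta>2) \<longleftrightarrow> \<phi> \<in> Gamma_th \<theta>1 \<theta>2)
    \<and> (group (ColG (Nest \<theta>1 \<theta>2))
         \<and> subgroup (Vop ` Gamma_th \<theta>1 \<theta>2) (ColG (Nest \<theta>1 \<theta>2)))
    \<and> (Col (Nest \<theta>1 \<theta>2) = {A \<circ> T | A T. A \<in> Grp (Alg (Nest \<theta>1 \<theta>2)) \<and> T \<in> Vop ` Gamma_th \<theta>1 \<theta>2}
         \<and> Grp (Alg (Nest \<theta>1 \<theta>2)) \<inter> Vop ` Gamma_th \<theta>1 \<theta>2 = {Iop})"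
proof -
  interpret nest_parametrisation \<theta>1 \<theta>2
    using assms by unfold_locales
  show ?thesis
    using group_GammaG subgroup_Gamma_th Vop_Col_iff group_ColG subgroup_Vop_Gamma_th
      Col_eq_Grp_Alg_comp_Vop Grp_Alg_Int_Vop_Gamma_th by blast
qed

end
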